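(* Let $(x_0:\ldots:x_4)\in\mathbf{P}^4(\mathbb{Q})$ with $x_0x_1x_2x_3x_4\neq0$. Then there is $w\in\mathbb{Q}$ with $w^2=(-3)\Delta'(x_0,\ldots,x_4)$ (for a, equivalently any, choice of rational homogeneous coordinates) if and only if the point $\iota((x_0:\ldots:x_4))=(1/x_0:\ldots:1/x_4)$ gives a $\mathbb{Q}$-rational point on the discriminantal covering, i.e. there is $w'\in\mathbb{Q}$ with $w'^2=(-3)\Delta(1/x_0,\ldots,1/x_4)$.
   Context: The discriminant is $$\Delta(a_0,\ldots,a_4):=\prod_{i_1,\ldots,i_4\in\{0,1\}}\Big(\sqrt{a_1a_2a_3a_4}+(-1)^{i_1}\sqrt{a_0a_2a_3a_4}+(-1)^{i_2}\sqrt{a_0a_1a_3a_4}+(-1)^{i_3}\sqrt{a_0a_1a_2a_4}+(-1)^{i_4}\sqrt{a_0a_1a_2a_3}\Big)\in\mathbb{Q}[a_0,\ldots,a_4]$$ (degree $32$), and $$\Delta'(x_0,\ldots,x_4):=\prod_{i_1,\ldots,i_4\in\{0,1\}}\big(\sqrt{x_0}+(-1)^{i_1}\sqrt{x_1}+(-1)^{i_2}\sqrt{x_2}+(-1)^{i_3}\sqrt{x_3}+(-1)^{i_4}\sqrt{x_4}\big)\in\mathbb{Q}[x_0,\ldots,x_4]$$ (degree $8$). The discriminantal covering is the double covering of $\mathbf{P}^4_{\mathbb{Q}}$ given by $w^2=-3\Delta(a_0,\ldots,a_4)$. The generalized Cremona transform is the birational map $\iota:\mathbf{P}^4\dashrightarrow\mathbf{P}^4$,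 $(a_0:\ldots:a_4)\mapsto(1/a_0:\ldots:1/a_4)$. *)

theory Defs
  imports Complex_Main
begin

text \<open>Since the product runs over all sign choices
  (and the number of factors is even), the product is independent of the branch chosen,
  and equals the value of the corresponding polynomial with rational coefficients.\<close>

definition Delta' :: "complex \<Rightarrow> complex \<Rightarrow> complex \<Rightarrow> complex \<Rightarrow> complex \<Rightarrow> complex" where
  "Delta' x0 x1 x2 x3 x4 =
     (\<Prod>i1\<in>{0,1::nat}. \<Prod>i2\<in>{0,1::nat}. \<Prod>i3\<in>{0,1::nat}. \<Prod>i4\<in>{0,1::nat}.
        csqrt x0 + (-1)^i1 * csqrt x1 + (-1)^i2 * csqrt x2
                 + (-1)^i3 * csqrt x3 + (-1)^i4 * csqrt x4)"

definition Delta :: "complex \<Rightarrow> complex \<Rightarrow> complex \<Rightarrow> complex \<Rightarrow> complex \<Rightarrow> complex" where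
  "Delta a0 a1 a2 a3 a4 =
     (\<Prod>i1\<in>{0,1::nat}. \<Prod>i2\<in>{0,1::nat}. \<Prod>i3\<in>{0,1::nat}. \<Prod>i4\<in>{0,1::nat}.
        csqrt (a1*a2*a3*a4) + (-1)^i1 * csqrt (a0*a2*a3*a4) + (-1)^i2 * csqrt (a0*a1*a3*a4)
          + (-1)^i3 * csqrt (a0*a1*a2*a4) + (-1)^i4 * csqrt (a0*a1*a2*a3))"

end

theory Submission
  imports Defs
begin

text \<open>Write \<open>\<Delta>'(x) = G(\<surd>x\<^sub>0,\<dots>,\<surd>x\<^sub>4)\<close> and
  \<open>\<Delta>(a) = G(\<surd>(a\<^sub>1a\<^sub>2a\<^sub>3a\<^sub>4),\<dots>)\<close> with \<open>G\<close> the product of all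
  \<open>s\<^sub>0 \<plusminus> s\<^sub>1 \<plusminus> \<dots> \<plusminus> s\<^sub>4\<close>. Then \<open>G\<close> is homogeneous of degree 16 and depends
  only on the squares \<open>s\<^sub>i\<^sup>2\<close>. For \<open>a\<^sub>i = 1/x\<^sub>i\<close> the \<open>i\<close>-th argument of \<open>\<Delta>\<close> squares to
  \<open>x\<^sub>i/P\<close> with \<open>P = x\<^sub>0\<cdots>x\<^sub>4\<close>, so \<open>\<Delta>(1/x) = \<Delta>'(x)/P\<^sup>8 = \<Delta>'(x)/(P\<^sup>4)\<^sup>2\<close>.
  The two sides therefore differ by the square of a nonzero rational, which does not
  affect whether \<open>-3\<close> times them is a rational square.\<close>

definition sign_sum_product :: "complex \<Rightarrow> complex \<Rightarrow> complex \<Rightarrow> complex \<Rightarrow> complex \<Rightarrow> complex" where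
  "sign_sum_product s0 s1 s2 s3 s4 =
     (\<Prod>i1\<in>{0,1::nat}. \<Prod>i2\<in>{0,1::nat}. \<Prod>i3\<in>{0,1::nat}. \<Prod>i4\<in>{0,1::nat}.
        s0 + (-1)^i1 * s1 + (-1)^i2 * s2 + (-1)^i3 * s3 + (-1)^i4 * s4)"

lemma Delta'_eq_sign_sum_product:
  "Delta' x0 x1 x2 x3 x4 = sign_sum_product (csqrt x0) (csqrt x1) (csqrt x2) (csqrt x3) (csqrt x4)"
  unfolding Delta'_def sign_sum_product_def ..

lemma Delta_eq_sign_sum_product:
  "Delta a0 a1 a2 a3 a4 =
     sign_sum_product (csqrt (a1*a2*a3*a4)) (csqrt (a0*a2*a3*a4)) (csqrt (a0*a1*a3*a4))
       (csqrt (a0*a1*a2*a4)) (csqrt (a0*a1*a2*a3))"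
  unfolding Delta_def sign_sum_product_def ..

lemma sign_sum_product_scale:
  "sign_sum_product (c*s0) (c*s1) (c*s2) (c*s3) (c*s4) = c^16 * sign_sum_product s0 s1 s2 s3 s4"
proof -
  have factor: "\<And>a b d e. c*s0 + a*(c*s1) + b*(c*s2) + d*(c*s3) + e*(c*s4)
      = c*(s0 + a*s1 + b*s2 + d*s3 + e*s4)"
    by (simp add: algebra_simps)
  have "card {0,1::nat} = 2" by simp
  then show ?thesis unfolding sign_sum_product_def factor
    by (simp only: prod.distrib prod_constant power_mult_distrib mult.assoc
        flip: power_mult power_add) simp
qed

lemma prod_sign_choice_uminus:
  fixes f :: "complex \<Rightarrow> complex"
  shows "(\<Prod>i\<in>{0,1::nat}. f ((-1)^i * -s)) = (\<Prod>i\<in>{0,1::nat}. f ((-1)^i * s))"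
  by (simp add: mult.commute)

lemma sign_sum_product_uminus1:
  "sign_sum_product s0 (-s1) s2 s3 s4 = sign_sum_product s0 s1 s2 s3 s4"
  unfolding sign_sum_product_def
  using prod_sign_choice_uminus[of "\<lambda>t. \<Prod>i2\<in>{0,1::nat}. \<Prod>i3\<in>{0,1::nat}. \<Prod>i4\<in>{0,1::nat}.
      s0 + t + (-1)^i2 * s2 + (-1)^i3 * s3 + (-1)^i4 * s4" s1] .

lemma sign_sum_product_uminus2:
  "sign_sum_product s0 s1 (-s2) s3 s4 = sign_sum_product s0 s1 s2 s3 s4"
  unfolding sign_sum_product_def
  using prod_sign_choice_uminus[of "\<lambda>t. \<Prod>i3\<in>{0,1::nat}. \<Prod>i4\<in>{0,1::nat}.
      s0 + (-1)^i1 * s1 + t + (-1)^i3 * s3 + (-1)^i4 * s4" s2 for i1] by simp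

lemma sign_sum_product_uminus3:
  "sign_sum_product s0 s1 s2 (-s3) s4 = sign_sum_product s0 s1 s2 s3 s4"
  unfolding sign_sum_product_def
  using prod_sign_choice_uminus[of "\<lambda>t. \<Prod>i4\<in>{0,1::nat}.
      s0 + (-1)^i1 * s1 + (-1)^i2 * s2 + t + (-1)^i4 * s4" s3 for i1 i2] by simp

lemma sign_sum_product_uminus4:
  "sign_sum_product s0 s1 s2 s3 (-s4) = sign_sum_product s0 s1 s2 s3 s4"
  unfolding sign_sum_product_def
  using prod_sign_choice_uminus[of "\<lambda>t. s0 + (-1)^i1 * s1 + (-1)^i2 * s2 + (-1)^i3 * s3 + t" s4
      for i1 i2 i3] by simp

lemma sign_sum_product_uminus0:
  "sign_sum_product (-s0) s1 s2 s3 s4 = sign_sum_product s0 s1 s2 s3 s4"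
proof -
  have "sign_sum_product (-s0) s1 s2 s3 s4
      = sign_sum_product ((-1)*s0) ((-1)*(-s1)) ((-1)*(-s2)) ((-1)*(-s3)) ((-1)*(-s4))"
    by simp
  also have "\<dots> = sign_sum_product s0 s1 s2 s3 s4"
    by (simp only: sign_sum_product_scale sign_sum_product_uminus1 sign_sum_product_uminus2
        sign_sum_product_uminus3 sign_sum_product_uminus4) simp
  finally show ?thesis .
qed

lemma sign_sum_product_cong_square:
  assumes "t0^2 = u0^2" "t1^2 = u1^2" "t2^2 = u2^2" "t3^2 = u3^2" "t4^2 = u4^2"
  shows "sign_sum_product t0 t1 t2 t3 t4 = sign_sum_product u0 u1 u2 u3 u4"
proof -
  have "t0 = u0 \<or> t0 = -u0" "t1 = u1 \<or> t1 = -u1" "t2 = u2 \<or> t2 = -u2"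
       "t3 = u3 \<or> t3 = -u3" "t4 = u4 \<or> t4 = -u4"
    using assms by (simp_all add: power2_eq_iff)
  then show ?thesis
    by (elim disjE) (simp_all add: sign_sum_product_uminus0 sign_sum_product_uminus1
        sign_sum_product_uminus2 sign_sum_product_uminus3 sign_sum_product_uminus4)
qed

lemma Delta_inverse:
  fixes x0 x1 x2 x3 x4 :: complex
  assumes "x0 \<noteq> 0" "x1 \<noteq> 0" "x2 \<noteq> 0" "x3 \<noteq> 0" "x4 \<noteq> 0"
  shows "Delta (1/x0) (1/x1) (1/x2) (1/x3) (1/x4) = Delta' x0 x1 x2 x3 x4 / (x0*x1*x2*x3*x4)^8"
proof -
  define c where "c = 1 / csqrt (x0*x1*x2*x3*x4)"
  have c_square: "c^2 = 1 / (x0*x1*x2*x3*x4)"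
    by (simp add: c_def power_divide)
  \<comment> \<open>each argument of \<open>Delta\<close> squares to \<open>x\<^sub>i\<cdot>c\<^sup>2\<close>\<close>
  have "Delta (1/x0) (1/x1) (1/x2) (1/x3) (1/x4)
      = sign_sum_product (c * csqrt x0) (c * csqrt x1) (c * csqrt x2) (c * csqrt x3) (c * csqrt x4)"
    unfolding Delta_eq_sign_sum_product
    by (rule sign_sum_product_cong_square)
      (use assms in \<open>simp_all add: power_mult_distrib c_square field_simps\<close>)
  also have "\<dots> = (c^2)^8 * Delta' x0 x1 x2 x3 x4"
    by (simp add: sign_sum_product_scale Delta'_eq_sign_sum_product flip: power_mult)
  finally show ?thesis
    by (simp add: c_square power_one_over)
qed

lemma rat_square_iff_scaled:
  fixes z :: "'a::field_char_0" and q :: rat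
  assumes "q \<noteq> 0"
  shows "(\<exists>w::rat. of_rat w ^ 2 = z) \<longleftrightarrow> (\<exists>w::rat. of_rat w ^ 2 = z / of_rat q ^ 2)"
proof
  assume "\<exists>w. of_rat w ^ 2 = z"
  then obtain w where "of_rat w ^ 2 = z" by blast
  then have "of_rat (w / q) ^ 2 = z / of_rat q ^ 2"
    by (simp add: of_rat_divide power_divide)
  then show "\<exists>w::rat. of_rat w ^ 2 = z / of_rat q ^ 2" by blast
next
  assume "\<exists>w. of_rat w ^ 2 = z / of_rat q ^ 2"
  then obtain w where "of_rat w ^ 2 = z / of_rat q ^ 2" by blast
  then have "of_rat (w * q) ^ 2 = z"
    using assms by (simp add: of_rat_mult power_mult_distrib field_simps)
  then show "\<exists>w::rat. of_rat w ^ 2 = z" by blast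
qed

theorem mainTheorem6:
  fixes x0 x1 x2 x3 x4 :: rat
  assumes "x0 * x1 * x2 * x3 * x4 \<noteq> 0"
  shows "(\<exists>w::rat. (of_rat w :: complex)^2
            = -3 * Delta' (of_rat x0) (of_rat x1) (of_rat x2) (of_rat x3) (of_rat x4))
     \<longleftrightarrow> (\<exists>w'::rat. (of_rat w' :: complex)^2
            = -3 * Delta (of_rat (1/x0)) (of_rat (1/x1)) (of_rat (1/x2)) (of_rat (1/x3)) (of_rat (1/x4)))"
proof -
  define P where "P = x0 * x1 * x2 * x3 * x4"
  have "P^4 \<noteq> 0"
    using assms by (simp add: P_def)
  have Delta_of_inverses: "Delta (of_rat (1/x0)) (of_rat (1/x1)) (of_rat (1/x2)) (of_rat (1/x3)) (of_rat (1/x4))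
      = Delta' (of_rat x0) (of_rat x1) (of_rat x2) (of_rat x3) (of_rat x4) / of_rat (P^4) ^ 2"
  proof -
    have "(of_rat (P^4) :: complex) ^ 2 = (of_rat x0 * of_rat x1 * of_rat x2 * of_rat x3 * of_rat x4) ^ 8"
      by (simp only: P_def of_rat_mult of_rat_power power_mult [symmetric]) simp
    then show ?thesis
      using assms Delta_inverse[of "of_rat x0" "of_rat x1" "of_rat x2" "of_rat x3" "of_rat x4"]
      by (simp add: of_rat_divide)
  qed
  show ?thesis
    unfolding Delta_of_inverses times_divide_eq_right by (rule rat_square_iff_scaled) fact
qed

end
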